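(* Let $j\ge1$ and $s\ge0$ be integers and let $g=g_{j,s,1}$ be the sequence defined in the context (case $\lambda=1$). Then $g$ is non-decreasing, $g(n)\equiv 1 \pmod j$ for all $n\ge1$, and its frequency function $\phi(q)=\#\{n\ge1: g(n)=q\}$ satisfies, for every positive integer $q$, \[ \phi(q)=\begin{cases} q+s, & q\equiv 1 \pmod j,\\ 0, & \text{otherwise.}\end{cases} \] Equivalently, $g$ is the sequence $1^{s+1},(j+1)^{s+j+1},(2j+1)^{s+2j+1},\dots$, where $a^{b}$ denotes the value $a$ repeated $b$ times.
   Context: Fix integers $j\ge1$, $\lambda\ge1$, $s\ge0$. Define a labeled infinite rooted tree $\mathcal K$ as follows. It has "supernodes" $S_0,S_1,S_2,\dots$ with an edge between $S_i$ and $S_{i+1}$ for every $i\ge0$ ($S_0$ is the root). $S_0$ has two further children: the "initial leaf" and a node $N_0$, which is a leaf. For each $i\ge1$, $S_i$ has a child $N_i$ (the "knot node"), and attached to $N_i$ are $\lambda$ chains, each a path of $i\cdot j$ nodes hanging from $N_i$; the last (bottom) node of each chain is a leaf. Each supernode carries $s$ labels and every other node carries exactly one label. The labels are the consecutive positive integers $1,2,3,\dots$, assigned in the following order: initial leaf, $S_0$, $N_0$; then for $i=1,2,3,\dots$: $S_i$ (its $s$ labels), $N_i$, then the nodes of the first chain of $N_i$ from top to bottom, then the second chain, ..., then the $\lambda$-th chain. The initial leaf has weight $1$; every other leaf of $\mathcal K$ (namely $N_0$ and the bottom node of each chain) has weight $j$. The leaf weight sequence $w(n)=w_{j,s,\lambda}(n)$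 ($n\ge1$) is the total weight of the leaves of $\mathcal K$ whose label is $\le n$. Explicitly, $w(n)=1+j\cdot\#\{\ell\in L:\ell\le n\}$, where $L$ consists of the number $s+2$ together with the numbers $L_{i,c}=s+2+\sum_{l=1}^{i-1}(s+1+\lambda l j)+s+1+c\,i\,j$ for $i\ge1$, $1\le c\le\lambda$. The sequence $g_{j,s,\lambda}$ is defined by $g_{j,s,\lambda}(n)=w_{j,s,\lambda}(n)$ for $1\le n\le 3+2s+\lambda j$ and $g_{j,s,\lambda}(n)=g_{j,s,\lambda}(n-s-g_{j,s,\lambda}(n-j))+\lambda j$ for $n>3+2s+\lambda j$ (this is well defined). In the case $\lambda=1$, $L=\{p_m: m\ge0\}$ with $p_m=1+\sum_{i=0}^{m}(s+ij+1)$. *)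

theory Defs
  imports Main
begin

definition Lval :: "nat \<Rightarrow> nat \<Rightarrow> nat \<Rightarrow> nat \<Rightarrow> nat \<Rightarrow> nat" where
  "Lval j s lam i c = s + 2 + (\<Sum>l=1..<i. s + 1 + lam * l * j) + s + 1 + c * i * j"

definition Lset :: "nat \<Rightarrow> nat \<Rightarrow> nat \<Rightarrow> nat set" where
  "Lset j s lam = {s + 2} \<union> {Lval j s lam i c | i c. 1 \<le> i \<and> 1 \<le> c \<and> c \<le> lam}"

definition wseq :: "nat \<Rightarrow> nat \<Rightarrow> nat \<Rightarrow> nat \<Rightarrow> nat" where
  "wseq j s lam n = 1 + j * card {l \<in> Lset j s lam. l \<le> n}"

text \<open>Since the recurrence is well defined (all referenced indices lie in 1..n-1),
  this determines g uniquely on n >= 1.\<close>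
definition is_g :: "nat \<Rightarrow> nat \<Rightarrow> nat \<Rightarrow> (nat \<Rightarrow> nat) \<Rightarrow> bool" where
  "is_g j s lam g \<longleftrightarrow>
     (\<forall>n. 1 \<le> n \<and> n \<le> 3 + 2*s + lam*j \<longrightarrow> g n = wseq j s lam n) \<and>
     (\<forall>n. n > 3 + 2*s + lam*j \<longrightarrow> g n = g (n - s - g (n - j)) + lam * j)"

end

theory Submission
  imports Defs
begin

(* Write b(0) = 1 and b(c+1) = b(c) + s + c*j + 1.  For lambda = 1 the leaf labels
   of the tree K are exactly the numbers b(c) with c >= 1 (the leaf N_0 has label b(1) = s + 2,
   the bottom of the single chain of N_i has label b(i+1)).  Hence the leaf weight sequence w is
   constant equal to 1 + c*j on the "block" [b(c), b(c+1)), which has length s + c*j + 1.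

   It then checks that w itself obeys
   the nested recurrence w(n) = w(n - s - w(n - j)) + j beyond the initial segment, with every
   referenced index lying in [1, n).  A general uniqueness lemma for nested recurrences of this
   shape then shows g = w on the positive integers, and the three claims of the theorem
   (monotonicity, g(n) = 1 mod j, frequency q + s of each value q = 1 mod j) are read off from
   the block description of w. *)

fun block_start :: "nat \<Rightarrow> nat \<Rightarrow> nat \<Rightarrow> nat" where
  "block_start j s 0 = 1"
| "block_start j s (Suc c) = block_start j s c + s + c * j + 1"

text \<open>Blocks are non-empty, so their starts increase strictly; in particular they are \<open>\<ge> 1\<close>
  and eventually exceed every \<open>n\<close>.\<close>
lemma block_start_strict_mono: "strict_mono (block_start j s)"
  by (rule strict_mono_Suc_iff[THEN iffD2]) simp

lemma block_start_pos: "1 \<le> block_start j s c"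
  by (induction c) auto

lemma block_start_ge: "c \<le> block_start j s c"
  by (induction c) auto

lemma leaf_label_block_start:
  assumes "1 \<le> i"
  shows "Lval j s 1 i 1 = block_start j s (Suc i)"
proof -
  have partial_sum: "s + 2 + (\<Sum>l=1..<Suc k. s + 1 + 1 * l * j) = block_start j s (Suc k)" for k
    by (induction k) simp_all
  obtain k where "i = Suc k" using assms not0_implies_Suc by fastforce
  then show ?thesis using partial_sum[of k] unfolding Lval_def by simp
qed

lemma leaf_iff_block_start: "l \<in> Lset j s 1 \<longleftrightarrow> (\<exists>c\<ge>1. l = block_start j s c)"
proof -
  have start: "block_start j s (Suc 0) = s + 2" by simp
  have "l \<in> Lset j s 1 \<longleftrightarrow> l = s + 2 \<or> (\<exists>i\<ge>1. l = Lval j s 1 i 1)"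
    unfolding Lset_def by (auto simp: le_antisym)
  also have "\<dots> \<longleftrightarrow> l = block_start j s (Suc 0) \<or> (\<exists>i\<ge>1. l = block_start j s (Suc i))"
    using leaf_label_block_start[of _ j s] start by (auto simp del: block_start.simps)
  also have "\<dots> \<longleftrightarrow> (\<exists>i. l = block_start j s (Suc i))"
    using not_less_eq_eq by (auto simp del: block_start.simps)
  also have "\<dots> \<longleftrightarrow> (\<exists>c\<ge>1. l = block_start j s c)"
    using Suc_le_D by (auto simp del: block_start.simps)
  finally show ?thesis .
qed

lemma wseq_block_count: "wseq j s 1 n = 1 + j * card {c. 1 \<le> c \<and> block_start j s c \<le> n}"
proof -
  have "{l \<in> Lset j s 1. l \<le> n} = block_start j s ` {c. 1 \<le> c \<and> block_start j s c \<le> n}"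
    using leaf_iff_block_start by auto
  moreover have "inj (block_start j s)"
    using block_start_strict_mono strict_mono_imp_inj_on by blast
  ultimately show ?thesis unfolding wseq_def by (simp add: card_image inj_on_subset)
qed

lemma block_start_le_iff:
  assumes "block_start j s c \<le> n" "n < block_start j s (Suc c)"
  shows "block_start j s c' \<le> n \<longleftrightarrow> c' \<le> c"
proof
  assume "block_start j s c' \<le> n"
  then have "block_start j s c' < block_start j s (Suc c)" using assms(2) by (rule le_less_trans)
  then show "c' \<le> c" using block_start_strict_mono[of j s] strict_mono_less less_Suc_eq_le by blast
next
  assume "c' \<le> c"
  then show "block_start j s c' \<le> n"
    using assms(1) block_start_strict_mono[of j s] strict_mono_less_eq order_trans by blast
qed

lemma wseq_on_block:
  assumes "block_start j s c \<le> n" "n < block_start j s (Suc c)"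
  shows "wseq j s 1 n = 1 + c * j"
proof -
  have "{c'. 1 \<le> c' \<and> block_start j s c' \<le> n} = {1..c}"
    by (simp only: block_start_le_iff[OF assms] atLeastAtMost_def atLeast_def atMost_def
        Collect_conj_eq)
  then show ?thesis unfolding wseq_block_count by simp
qed

lemma block_exists:
  assumes "1 \<le> n"
  shows "\<exists>c. block_start j s c \<le> n \<and> n < block_start j s (Suc c)"
proof -
  have "n < block_start j s (Suc n)" using block_start_ge Suc_le_lessD by blast
  moreover have "\<not> n < block_start j s 0" using assms by simp
  ultimately obtain c where "\<not> n < block_start j s c" "n < block_start j s (Suc c)"
    using ex_least_nat_less[of "\<lambda>c. n < block_start j s c"] by blast
  then show ?thesis by (intro exI[of _ c]) simp
qed

text \<open>Whether \<open>n - j\<close> is still in block \<open>c\<close> or already in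
  block \<open>c - 1\<close>, the shift \<open>s + w(n - j)\<close> moves \<open>n\<close> exactly one block down.\<close>
lemma recursion_target:
  assumes c: "2 \<le> c"
    and n: "block_start j s c \<le> n" "n < block_start j s (Suc c)"
  shows "block_start j s (c - 1) \<le> n - s - wseq j s 1 (n - j)
       \<and> n - s - wseq j s 1 (n - j) < block_start j s c"
proof -
  obtain k where k: "c = Suc (Suc k)" using c by (metis add_2_eq_Suc le_Suc_ex)
  define b0 b1 where "b0 = block_start j s (c - 1)" and "b1 = block_start j s c"
  have b1: "b1 = b0 + s + j + k * j + 1"
    and n': "b1 \<le> n" "n < b1 + s + j + j + k * j + 1"
    using n unfolding b0_def b1_def k by simp_all
  have cj: "c * j = j + j + k * j" "(c - 1) * j = j + k * j" unfolding k by simp_all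
  define W where "W = wseq j s 1 (n - j)"
  have "W = 1 + c * j \<and> b1 + j \<le> n \<or> W = 1 + (c - 1) * j \<and> n < b1 + j"
  proof (cases "b1 \<le> n - j")
    case True
    then have "W = 1 + c * j"
      using n unfolding W_def by (intro wseq_on_block) (simp_all add: b1_def)
    then show ?thesis using True b1 by linarith
  next
    case False
    then have "W = 1 + (c - 1) * j"
      using n' b1 k unfolding W_def by (intro wseq_on_block) (simp_all add: b0_def b1_def)
    then show ?thesis using False by linarith
  qed
  then have "b0 \<le> n - s - W" and "n - s - W < b1"
    using n' b1 cj by auto
  then show ?thesis unfolding b0_def b1_def W_def by simp
qed

lemma wseq_recurrence:
  assumes "block_start j s 2 \<le> n"
  shows "wseq j s 1 n = wseq j s 1 (n - s - wseq j s 1 (n - j)) + j"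
    and "1 \<le> n - s - wseq j s 1 (n - j) \<and> n - s - wseq j s 1 (n - j) < n"
proof -
  have "1 \<le> n" using assms block_start_ge[of 2 j s] by linarith
  then obtain c where n: "block_start j s c \<le> n" "n < block_start j s (Suc c)"
    using block_exists by blast
  have "2 \<le> c"
  proof (rule ccontr)
    assume "\<not> 2 \<le> c"
    then have "Suc c \<le> 2" by simp
    then have "block_start j s (Suc c) \<le> block_start j s 2"
      by (simp only: strict_mono_less_eq[OF block_start_strict_mono])
    then show False using assms n(2) by linarith
  qed
  then obtain c' where c': "c = Suc c'" "1 \<le> c'" by (cases c) auto
  define m where "m = n - s - wseq j s 1 (n - j)"
  have m: "block_start j s c' \<le> m" "m < block_start j s (Suc c')"
    using recursion_target[OF \<open>2 \<le> c\<close> n] unfolding m_def c'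
    by (simp_all del: block_start.simps)
  have "wseq j s 1 n = 1 + Suc c' * j" using wseq_on_block[OF n] c'(1) by simp
  also have "\<dots> = wseq j s 1 m + j" using wseq_on_block[OF m] by simp
  finally show "wseq j s 1 n = wseq j s 1 m + j" .
  have "block_start j s (Suc c') \<le> n" using n(1) c'(1) by simp
  then show "1 \<le> m \<and> m < n" using m block_start_pos[of j s c'] by linarith
qed

lemma nested_recurrence_unique:
  fixes g w :: "nat \<Rightarrow> nat"
  assumes j: "1 \<le> j" "j \<le> N"
    and init: "\<And>n. 1 \<le> n \<Longrightarrow> n \<le> N \<Longrightarrow> g n = w n"
    and rec_g: "\<And>n. N < n \<Longrightarrow> g n = g (n - a - g (n - j)) + d"
    and rec_w: "\<And>n. N < n \<Longrightarrow> w n = w (n - a - w (n - j)) + d"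
    and refs: "\<And>n. N < n \<Longrightarrow> 1 \<le> n - a - w (n - j) \<and> n - a - w (n - j) < n"
  shows "1 \<le> n \<Longrightarrow> g n = w n"
proof (induction n rule: less_induct)
  case (less n)
  show ?case
  proof (cases "n \<le> N")
    case True
    then show ?thesis using init less.prems by blast
  next
    case False
    then have "N < n" by simp
    have "g (n - j) = w (n - j)" using less.IH[of "n - j"] j \<open>N < n\<close> by simp
    then have "g n = g (n - a - w (n - j)) + d" using rec_g[OF \<open>N < n\<close>] by simp
    also have "\<dots> = w (n - a - w (n - j)) + d" using less.IH refs[OF \<open>N < n\<close>] by simp
    also have "\<dots> = w n" using rec_w[OF \<open>N < n\<close>] by simp
    finally show ?thesis .
  qed
qed

lemma is_g_eq_wseq:
  assumes "1 \<le> j" and "is_g j s 1 g" and "1 \<le> n"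
  shows "g n = wseq j s 1 n"
proof -
  define N where "N = 3 + 2 * s + j"
  have init: "\<And>n. 1 \<le> n \<Longrightarrow> n \<le> N \<Longrightarrow> g n = wseq j s 1 n"
    and rec_g: "\<And>n. N < n \<Longrightarrow> g n = g (n - s - g (n - j)) + j"
    using assms(2) unfolding is_g_def N_def mult_1 by blast+
  have start2: "block_start j s 2 = N" by (simp add: N_def eval_nat_numeral)
  have rec_w: "wseq j s 1 n = wseq j s 1 (n - s - wseq j s 1 (n - j)) + j"
    and refs: "1 \<le> n - s - wseq j s 1 (n - j) \<and> n - s - wseq j s 1 (n - j) < n" if "N < n" for n
  proof -
    have "block_start j s 2 \<le> n" using that start2 by simp
    then show "wseq j s 1 n = wseq j s 1 (n - s - wseq j s 1 (n - j)) + j"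
      and "1 \<le> n - s - wseq j s 1 (n - j) \<and> n - s - wseq j s 1 (n - j) < n"
      by (rule wseq_recurrence)+
  qed
  have "j \<le> N" by (simp add: N_def)
  then show ?thesis
    using nested_recurrence_unique[OF assms(1) _ init rec_g rec_w refs] assms(3) by blast
qed

lemma wseq_mono:
  assumes "m \<le> n"
  shows "wseq j s lam m \<le> wseq j s lam n"
proof -
  have "card {l \<in> Lset j s lam. l \<le> m} \<le> card {l \<in> Lset j s lam. l \<le> n}"
    using assms by (intro card_mono) (auto intro: finite_subset[of _ "{..n}"])
  then show ?thesis unfolding wseq_def by simp
qed

lemma wseq_mod: "wseq j s lam n mod j = 1 mod j"
  unfolding wseq_def by (rule mod_mult_self2)

lemma wseq_level_set:
  assumes "1 \<le> j"
  shows "{n. 1 \<le> n \<and> wseq j s 1 n = 1 + c * j} = {block_start j s c..<block_start j s (Suc c)}"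
proof (rule set_eqI)
  fix n
  have "1 \<le> block_start j s c" by (rule block_start_pos)
  moreover have "n \<in> {block_start j s c..<block_start j s (Suc c)}" if "1 \<le> n" "wseq j s 1 n = 1 + c * j"
  proof -
    obtain c' where c': "block_start j s c' \<le> n" "n < block_start j s (Suc c')"
      using block_exists \<open>1 \<le> n\<close> by blast
    then have "c' = c" using wseq_on_block[OF c'] that assms by simp
    then show ?thesis using c' by simp
  qed
  ultimately show "n \<in> {n. 1 \<le> n \<and> wseq j s 1 n = 1 + c * j}
      \<longleftrightarrow> n \<in> {block_start j s c..<block_start j s (Suc c)}"
    using wseq_on_block by fastforce
qed

lemma wseq_frequency:
  assumes "1 \<le> j" "1 \<le> q"
  shows "finite {n. 1 \<le> n \<and> wseq j s 1 n = q}
       \<and> card {n. 1 \<le> n \<and> wseq j s 1 n = q} = (if q mod j = 1 mod j then q + s else 0)"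
proof (cases "q mod j = 1 mod j")
  case True
  then have "j dvd q - 1" using assms(2) mod_eq_dvd_iff_nat by blast
  then obtain c where q: "q = 1 + c * j" using assms(2) by (metis dvd_def le_add_diff_inverse mult.commute)
  show ?thesis using True wseq_level_set[OF assms(1), of s c] unfolding q by simp
next
  case False
  then have no_n: "{n. 1 \<le> n \<and> wseq j s 1 n = q} = {}" using wseq_mod by auto
  show ?thesis unfolding no_n using False by simp
qed

theorem theorem4p1:
  fixes j s :: nat and g :: "nat \<Rightarrow> nat"
  assumes "j \<ge> 1"
    and "is_g j s 1 g"
  shows "(\<forall>m n. 1 \<le> m \<and> m \<le> n \<longrightarrow> g m \<le> g n)
       \<and> (\<forall>n\<ge>1. g n mod j = 1 mod j)
       \<and> (\<forall>q\<ge>1. finite {n. n \<ge> 1 \<and> g n = q} \<and>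
             card {n. n \<ge> 1 \<and> g n = q} = (if q mod j = 1 mod j then q + s else 0))"
proof -
  have g_w: "g n = wseq j s 1 n" if "1 \<le> n" for n
    using is_g_eq_wseq[OF assms that] .
  have "{n. n \<ge> 1 \<and> g n = q} = {n. 1 \<le> n \<and> wseq j s 1 n = q}" for q
    using g_w by auto
  then show ?thesis
    using g_w wseq_mono wseq_mod wseq_frequency[OF assms(1)] by (simp add: order_trans[of 1])
qed

end
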